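(* Let $\mathbf{X}$ be a signal satisfying $\mathbf{X}=\mathbf{D}_1\boldsymbol{\Gamma}_1$, $\boldsymbol{\Gamma}_1=\mathbf{D}_2\boldsymbol{\Gamma}_2,\dots,\boldsymbol{\Gamma}_{K-1}=\mathbf{D}_K\boldsymbol{\Gamma}_K$, where $\{\mathbf{D}_i\}_{i=1}^K$ are convolutional dictionaries with mutual coherences $\mu(\mathbf{D}_i)$. Suppose that for all $1\le i\le K$, $$\|\boldsymbol{\Gamma}_i\|_{0,\infty}^{s}<\tfrac12\Big(1+\tfrac{1}{\mu(\mathbf{D}_i)}\Big),$$ and that the thresholds $\lambda_i$ satisfy $\|\boldsymbol{\Gamma}_i\|_{0,\infty}^{s}\le \lambda_i<\tfrac12\big(1+\tfrac{1}{\mu(\mathbf{D}_i)}\big)$ for all $1\le i\le K$. Then $\{\boldsymbol{\Gamma}_i\}_{i=1}^K$ is the unique solution of the problem $\mathrm{DCP}_{\boldsymbol\lambda}$ for $\mathbf{X}$.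
   Context: Setting (ML-CSC model). Signals are one-dimensional of length $N$ with periodic (cyclic) boundary conditions. Set $m_0=1$ and $\boldsymbol{\Gamma}_0=\mathbf{X}\in\mathbb{R}^N$. For $i\ge1$, $\boldsymbol{\Gamma}_i\in\mathbb{R}^{Nm_i}$ is indexed so that entry $k m_i+r$ ($0\le k<N$, $0\le r<m_i$) is the coefficient of filter $r$ at spatial shift $k$. The dictionary $\mathbf{D}_i\in\mathbb{R}^{Nm_{i-1}\times Nm_i}$ is a (stride) convolutional dictionary: it has $m_i$ local filters of length $n_{i-1}m_{i-1}$, and its column indexed $km_i+r$ is filter $r$ placed (cyclically) on entries $km_{i-1},\dots,km_{i-1}+n_{i-1}m_{i-1}-1$ of an $\mathbb{R}^{Nm_{i-1}}$ vector and zero elsewhere (for $i=1$ this is an ordinary convolutional dictionary with filters of length $n_0$). All columns (atoms) have unit $\ell_2$ norm. The mutual coherence is $\mu(\mathbf{D})=\max_{i\ne j}|\mathbf{d}_i^T\mathbf{d}_j|$ over distinct columns. Stripes: for $i\ge1$, the $j$-th stripe $\mathbf{S}_{i,j}\boldsymbol{\Gamma}_i$ is the subvector of $\boldsymbol{\Gamma}_i$ of length $(2n_{i-1}-1)m_i$ consisting of the coefficients at spatial shifts $k\in\{j-n_{i-1}+1,\dots,j+n_{i-1}-1\}$ (mod $N$), all channels, i.e. the coefficients of all atoms of $\mathbf{D}_i$ overlapping the $j$-th length-$n_{i-1}m_{i-1}$ patch of $\boldsymbol{\Gamma}_{i-1}$. Define $\|\boldsymbol{\Gamma}_i\|_{0,\infty}^{s}=\max_j\|\mathbf{S}_{i,j}\boldsymbol{\Gamma}_i\|_0$.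 Deep coding problem $\mathrm{DCP}_{\boldsymbol\lambda}$: given $\mathbf{X}$, $\{\mathbf{D}_i\}$ and $\boldsymbol\lambda=(\lambda_1,\dots,\lambda_K)$, find $\{\boldsymbol{\Gamma}_i\}_{i=1}^K$ such that $\boldsymbol{\Gamma}_{i-1}=\mathbf{D}_i\boldsymbol{\Gamma}_i$ and $\|\boldsymbol{\Gamma}_i\|_{0,\infty}^{s}\le\lambda_i$ for all $1\le i\le K$ (with $\boldsymbol{\Gamma}_0=\mathbf{X}$). *)

theory Defs
  imports Complex_Main "HOL-Library.Extended_Real"
begin

(* Vectors in R^{N m} are represented as functions nat => real; only the
   entries with index < N*m are meaningful.  A matrix in R^{R x C} is a
   function  D :: nat => nat => real  with D p c the entry in row p, column c. *)

definition matvec :: "nat \<Rightarrow> (nat \<Rightarrow> nat \<Rightarrow> real) \<Rightarrow> (nat \<Rightarrow> real) \<Rightarrow> nat \<Rightarrow> real" where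
  "matvec C D G p = (\<Sum>c<C. D p c * G c)"

(* (Stride) convolutional dictionary of size (N*mp) x (N*mc) with mc local
   filters of length len*mp: column k*mc+r is filter r placed cyclically on
   entries k*mp, ..., k*mp + len*mp - 1 of an R^{N*mp} vector, zero elsewhere. *)
definition conv_dict :: "nat \<Rightarrow> nat \<Rightarrow> nat \<Rightarrow> nat \<Rightarrow> (nat \<Rightarrow> nat \<Rightarrow> real) \<Rightarrow> bool" where
  "conv_dict N mp mc len D \<longleftrightarrow>
     (\<exists>h :: nat \<Rightarrow> nat \<Rightarrow> real. \<forall>p < N*mp. \<forall>c < N*mc.
        D p c = (let t = (p + N*mp - (c div mc)*mp) mod (N*mp)
                 in if t < len*mp then h (c mod mc) t else 0))"

definition unit_columns :: "nat \<Rightarrow> nat \<Rightarrow> (nat \<Rightarrow> nat \<Rightarrow> real) \<Rightarrow> bool" where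
  "unit_columns R C D \<longleftrightarrow> (\<forall>c<C. (\<Sum>p<R. (D p c)^2) = 1)"

definition mutual_coherence :: "nat \<Rightarrow> nat \<Rightarrow> (nat \<Rightarrow> nat \<Rightarrow> real) \<Rightarrow> real" where
  "mutual_coherence R C D =
     (let S = {\<bar>\<Sum>p<R. D p a * D p b\<bar> | a b. a < C \<and> b < C \<and> a \<noteq> b}
      in if S = {} then 0 else Max S)"

(* || S_{j} G ||_0 for a coefficient vector G in R^{N m}, patch length n:
   number of nonzero coefficients at spatial shifts k in {j-n+1,...,j+n-1} mod N,
   all channels r < m (entry k*m + r). *)
definition stripe_l0 :: "nat \<Rightarrow> nat \<Rightarrow> nat \<Rightarrow> (nat \<Rightarrow> real) \<Rightarrow> nat \<Rightarrow> nat" where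
  "stripe_l0 N n m G j =
     card {c. c < N*m \<and> G c \<noteq> 0 \<and>
              (\<exists>d::int. \<bar>d\<bar> < int n \<and> int (c div m) = (int j + d) mod int N)}"

definition stripe_norm :: "nat \<Rightarrow> nat \<Rightarrow> nat \<Rightarrow> (nat \<Rightarrow> real) \<Rightarrow> nat" where
  "stripe_norm N n m G = Max (stripe_l0 N n m G ` {..<N})"

(* the bound (1 + 1/mu)/2, in the extended reals so that mu = 0 gives +infinity *)
definition coh_bound :: "real \<Rightarrow> ereal" where
  "coh_bound mu = (1 + 1 / ereal mu) / 2"

(* {Gamma_i}_{i=1..K} solves DCP_lambda for X, with Gamma_0 = X.
   Layer i uses dictionary D i of size (N*m(i-1)) x (N*m i), and stripes w.r.t.
   patch length n(i-1). *)
definition dcp_solution ::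
  "nat \<Rightarrow> (nat \<Rightarrow> nat) \<Rightarrow> (nat \<Rightarrow> nat) \<Rightarrow> nat \<Rightarrow> (nat \<Rightarrow> nat \<Rightarrow> nat \<Rightarrow> real)
   \<Rightarrow> (nat \<Rightarrow> real) \<Rightarrow> (nat \<Rightarrow> real) \<Rightarrow> (nat \<Rightarrow> nat \<Rightarrow> real) \<Rightarrow> bool" where
  "dcp_solution N m n K D lam X G \<longleftrightarrow>
     (\<forall>i\<in>{1..K}. \<forall>p < N * m (i-1).
        (if i = 1 then X p else G (i-1) p) = matvec (N * m i) (D i) (G i) p) \<and>
     (\<forall>i\<in>{1..K}. real (stripe_norm N (n (i-1)) (m i) (G i)) \<le> lam i)"

end

theory Submission
  imports Defs
begin

(* If two coefficient vectors A, B of one convolutional layer have the same image, their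
   difference x lies in the kernel of the dictionary.  At an entry a where |x| peaks, the Gram
   identity x_a = - sum_{c <> a} <d_a, d_c> x_c gives 1 <= mu |T|, where T is the support of x
   among the atoms overlapping atom a.  All those atoms lie in the stripe S_j centred at the
   shift j of a, so |T| + 1 <= ||S_j A||_0 + ||S_j B||_0 <= 2 lambda < 1 + 1/mu, a contradiction.
   Uniqueness for the whole DCP then follows layer by layer: equal Gamma_{i-1} means equal
   images under D_i. *)

definition within_stripe :: "nat \<Rightarrow> nat \<Rightarrow> nat \<Rightarrow> nat \<Rightarrow> bool" where
  "within_stripe N n j k \<longleftrightarrow> (\<exists>d::int. \<bar>d\<bar> < int n \<and> int k = (int j + d) mod int N)"

lemma stripe_l0_within_stripe:
  "stripe_l0 N n m G j = card {c. c < N*m \<and> G c \<noteq> 0 \<and> within_stripe N n j (c div m)}"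
  unfolding stripe_l0_def within_stripe_def ..

lemma within_stripe_refl: "j < N \<Longrightarrow> 0 < n \<Longrightarrow> within_stripe N n j j"
  unfolding within_stripe_def by (intro exI[of _ 0]) simp

lemma stripe_l0_le_stripe_norm: "j < N \<Longrightarrow> stripe_l0 N n m G j \<le> stripe_norm N n m G"
  unfolding stripe_norm_def by (intro Max_ge) auto

lemma stripe_l0_diff_le:
  "stripe_l0 N n m (\<lambda>c. A c - B c) j \<le> stripe_l0 N n m A j + stripe_l0 N n m B j"
proof -
  let ?supp = "\<lambda>G. {c. c < N*m \<and> G c \<noteq> 0 \<and> within_stripe N n j (c div m)}"
  have "card (?supp (\<lambda>c. A c - B c)) \<le> card (?supp A \<union> ?supp B)"
    by (intro card_mono) auto
  also have "\<dots> \<le> card (?supp A) + card (?supp B)" by (rule card_Un_le)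
  finally show ?thesis unfolding stripe_l0_within_stripe .
qed

lemma cyclic_window_offset:
  fixes p k N mp :: nat
  assumes "0 < mp" "k \<le> N"
  shows "(p + N*mp - k*mp) mod (N*mp) = mp * ((p div mp + N - k) mod N) + p mod mp"
proof -
  have "p + N*mp - k*mp = (p div mp + N - k) * mp + p mod mp"
  proof -
    have "(p div mp + N - k) * mp = p div mp * mp + (N*mp - k*mp)"
      using assms(2) by (simp add: add_mult_distrib diff_mult_distrib)
    moreover have "k*mp \<le> N*mp" using assms(2) by simp
    ultimately show ?thesis using div_mult_mod_eq[of p mp] by linarith
  qed
  then show ?thesis
    using assms(1) by (simp add: mod_mult2_eq mult.commute[of N mp])
qed

lemma cyclic_window_offset_less_iff:
  fixes p k N mp len :: nat
  assumes "0 < mp" "k \<le> N"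
  shows "(p + N*mp - k*mp) mod (N*mp) < len*mp \<longleftrightarrow> (p div mp + N - k) mod N < len"
proof -
  define e where "e = (p div mp + N - k) mod N"
  have "p mod mp < mp" using assms(1) by simp
  have "mp * e + p mod mp < len*mp \<longleftrightarrow> e < len"
  proof
    assume "mp * e + p mod mp < len*mp"
    then have "e * mp < len * mp" by (metis add_lessD1 mult.commute)
    then show "e < len" by simp
  next
    assume "e < len"
    then have "mp * (e + 1) \<le> mp * len" by (intro mult_le_mono2) simp
    then show "mp * e + p mod mp < len*mp" using \<open>p mod mp < mp\<close> by (simp add: mult.commute)
  qed
  then show ?thesis using cyclic_window_offset[OF assms] unfolding e_def by simp
qed

lemma within_stripe_if_common_window:
  fixes P N ka kb len :: nat
  assumes "ka \<le> N" "kb < N"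
    and "(P + N - ka) mod N < len" "(P + N - kb) mod N < len"
  shows "within_stripe N len ka kb"
proof -
  have residue: "int ((P + N - k) mod N) = (int P - int k) mod int N" if "k \<le> N" for k
  proof -
    have "int (P + N - k) = (int P - int k) + int N" using that by simp
    then show ?thesis by (simp add: zmod_int)
  qed
  define ea eb where "ea = (P + N - ka) mod N" and "eb = (P + N - kb) mod N"
  have "(int ea - int eb) mod int N = ((int P - int ka) - (int P - int kb)) mod int N"
    unfolding ea_def eb_def residue[OF assms(1)] residue[OF less_imp_le[OF assms(2)]]
    by (rule mod_diff_eq)
  then have "(int ka + (int ea - int eb)) mod int N = (int ka + (int kb - int ka)) mod int N"
    by (intro mod_add_cong) simp_all
  also have "\<dots> = int kb" using assms(2) by simp
  finally have "int kb = (int ka + (int ea - int eb)) mod int N" ..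
  moreover have "\<bar>int ea - int eb\<bar> < int len" using assms(3,4) unfolding ea_def eb_def by simp
  ultimately show ?thesis unfolding within_stripe_def by blast
qed

lemma conv_dict_inner_nonzero_within_stripe:
  assumes D: "conv_dict N mp mc len D" and "0 < mp" and a: "a < N*mc" and c: "c < N*mc"
    and inner: "(\<Sum>p<N*mp. D p a * D p c) \<noteq> 0"
  shows "within_stripe N len (a div mc) (c div mc)"
proof -
  have "\<exists>p<N*mp. D p a * D p c \<noteq> 0"
  proof (rule ccontr)
    assume "\<not> ?thesis"
    then have "(\<Sum>p<N*mp. D p a * D p c) = 0" by (intro sum.neutral) auto
    with inner show False ..
  qed
  then obtain p where p: "p < N*mp" and "D p a \<noteq> 0" "D p c \<noteq> 0" by auto
  obtain h where h: "\<forall>p<N*mp. \<forall>c<N*mc.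
      D p c = (let t = (p + N*mp - (c div mc)*mp) mod (N*mp) in if t < len*mp then h (c mod mc) t else 0)"
    using D unfolding conv_dict_def by blast
  have window: "(p div mp + N - k div mc) mod N < len" if k: "k < N*mc" "D p k \<noteq> 0" for k
  proof -
    have "D p k = (let t = (p + N*mp - (k div mc)*mp) mod (N*mp)
                   in if t < len*mp then h (k mod mc) t else 0)"
      using h p k(1) by blast
    with k(2) have "(p + N*mp - (k div mc)*mp) mod (N*mp) < len*mp"
      unfolding Let_def by (simp split: if_splits)
    moreover have "k div mc \<le> N" using k(1) by (simp add: less_mult_imp_div_less less_imp_le)
    ultimately show ?thesis
      using cyclic_window_offset_less_iff[where k = "k div mc" and N = N and p = p and len = len,
          OF \<open>0 < mp\<close>] by simp
  qed
  have "a div mc \<le> N" "c div mc < N"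
    using a c by (simp_all add: less_mult_imp_div_less less_imp_le)
  with window[OF a \<open>D p a \<noteq> 0\<close>] window[OF c \<open>D p c \<noteq> 0\<close>] show ?thesis
    by (intro within_stripe_if_common_window)
qed

lemma abs_inner_le_mutual_coherence:
  assumes "a < C" "b < C" "a \<noteq> b"
  shows "\<bar>\<Sum>p<R. D p a * D p b\<bar> \<le> mutual_coherence R C D"
proof -
  let ?S = "{\<bar>\<Sum>p<R. D p a * D p b\<bar> | a b. a < C \<and> b < C \<and> a \<noteq> b}"
  have "?S \<subseteq> (\<lambda>(a, b). \<bar>\<Sum>p<R. D p a * D p b\<bar>) ` ({..<C} \<times> {..<C})" by auto
  then have "finite ?S" by (rule finite_subset) simp
  moreover have "\<bar>\<Sum>p<R. D p a * D p b\<bar> \<in> ?S" using assms by blast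
  ultimately show ?thesis unfolding mutual_coherence_def Let_def by auto
qed

lemma obtain_nonzero_abs_peak:
  fixes x :: "nat \<Rightarrow> real"
  assumes "\<exists>c<C. x c \<noteq> 0"
  obtains a where "a < C" "x a \<noteq> 0" "\<And>c. c < C \<Longrightarrow> \<bar>x c\<bar> \<le> \<bar>x a\<bar>"
proof -
  define M where "M = Max ((\<lambda>c. \<bar>x c\<bar>) ` {..<C})"
  have "M \<in> (\<lambda>c. \<bar>x c\<bar>) ` {..<C}"
    unfolding M_def using assms by (intro Max_in) auto
  then obtain a where a: "a < C" "\<bar>x a\<bar> = M" by auto
  have peak: "\<bar>x c\<bar> \<le> \<bar>x a\<bar>" if "c < C" for c
    unfolding a(2) M_def using that by (intro Max_ge) auto
  with assms have "x a \<noteq> 0" by fastforce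
  with a(1) peak that show ?thesis by blast
qed

lemma null_vector_coherence_bound:
  fixes D :: "nat \<Rightarrow> nat \<Rightarrow> real" and x :: "nat \<Rightarrow> real"
  assumes unit: "unit_columns R C D" and null: "\<forall>p<R. matvec C D x p = 0"
    and a: "a < C" "x a \<noteq> 0" and peak: "\<And>c. c < C \<Longrightarrow> \<bar>x c\<bar> \<le> \<bar>x a\<bar>"
  shows "1 \<le> mutual_coherence R C D
              * card {c. c < C \<and> c \<noteq> a \<and> x c \<noteq> 0 \<and> (\<Sum>p<R. D p a * D p c) \<noteq> 0}"
proof -
  define \<mu> where "\<mu> = mutual_coherence R C D"
  define g where "g c = (\<Sum>p<R. D p a * D p c)" for c
  define S where "S = {c. c < C \<and> c \<noteq> a \<and> x c \<noteq> 0 \<and> g c \<noteq> 0}"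
  have "(\<Sum>c<C. g c * x c) = (\<Sum>c<C. \<Sum>p<R. D p a * (D p c * x c))"
    unfolding g_def by (simp add: sum_distrib_right mult.assoc)
  also have "\<dots> = (\<Sum>p<R. D p a * matvec C D x p)"
    unfolding matvec_def by (subst sum.swap) (simp add: sum_distrib_left)
  also have "\<dots> = 0" using null by simp
  finally have gram: "(\<Sum>c<C. g c * x c) = 0" .
  have "g a = 1" using unit a(1) unfolding unit_columns_def g_def by (simp add: power2_eq_square)
  with gram a(1) have "x a = - (\<Sum>c\<in>{..<C} - {a}. g c * x c)" by (simp add: sum.remove)
  also have "(\<Sum>c\<in>{..<C} - {a}. g c * x c) = (\<Sum>c\<in>S. g c * x c)"
    by (rule sum.mono_neutral_right) (auto simp: S_def)
  finally have "\<bar>x a\<bar> = \<bar>\<Sum>c\<in>S. g c * x c\<bar>" by simp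
  also have "\<dots> \<le> (\<Sum>c\<in>S. \<bar>g c\<bar> * \<bar>x c\<bar>)"
    unfolding abs_mult[symmetric] by (rule sum_abs)
  also have "\<dots> \<le> (\<Sum>c\<in>S. \<mu> * \<bar>x a\<bar>)"
  proof (rule sum_mono)
    fix c assume "c \<in> S"
    then have "\<bar>g c\<bar> \<le> \<mu>" and "\<bar>x c\<bar> \<le> \<bar>x a\<bar>"
      using abs_inner_le_mutual_coherence a(1) peak unfolding S_def g_def \<mu>_def by auto
    then show "\<bar>g c\<bar> * \<bar>x c\<bar> \<le> \<mu> * \<bar>x a\<bar>"
      by (meson abs_ge_zero mult_mono order_trans)
  qed
  also have "\<dots> = \<bar>x a\<bar> * (\<mu> * card S)" by simp
  finally show ?thesis
    using a(2) unfolding \<mu>_def S_def g_def by simp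
qed

lemma less_coh_boundD:
  assumes "0 < mu" "ereal lam < coh_bound mu"
  shows "2 * lam < 1 + 1 / mu"
proof -
  have "coh_bound mu = ereal ((1 + 1 / mu) / 2)"
    unfolding coh_bound_def using assms(1) by (simp add: one_ereal_def)
  with assms(2) show ?thesis by simp
qed

lemma conv_dict_overlap_card_le_stripe_l0:
  assumes conv: "conv_dict N mp mc len D" and "0 < mp" "0 < len"
    and a: "a < N*mc" "x a \<noteq> 0"
  shows "card {c. c < N*mc \<and> c \<noteq> a \<and> x c \<noteq> 0 \<and> (\<Sum>p<N*mp. D p a * D p c) \<noteq> 0} + 1
           \<le> stripe_l0 N len mc x (a div mc)"
proof -
  define S where "S = {c. c < N*mc \<and> c \<noteq> a \<and> x c \<noteq> 0 \<and> (\<Sum>p<N*mp. D p a * D p c) \<noteq> 0}"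
  define j where "j = a div mc"
  have "j < N" using a(1) unfolding j_def by (simp add: less_mult_imp_div_less)
  have "insert a S \<subseteq> {c. c < N*mc \<and> x c \<noteq> 0 \<and> within_stripe N len j (c div mc)}"
  proof
    fix c assume "c \<in> insert a S"
    then show "c \<in> {c. c < N*mc \<and> x c \<noteq> 0 \<and> within_stripe N len j (c div mc)}"
    proof
      assume "c = a"
      then show ?thesis
        using a within_stripe_refl[OF \<open>j < N\<close> \<open>0 < len\<close>] by (simp add: j_def)
    next
      assume "c \<in> S"
      then show ?thesis
        using conv_dict_inner_nonzero_within_stripe[OF conv \<open>0 < mp\<close> a(1)] unfolding S_def j_def by blast
    qed
  qed
  then have "card (insert a S) \<le> stripe_l0 N len mc x j"
    unfolding stripe_l0_within_stripe by (intro card_mono) auto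
  moreover have "card (insert a S) = card S + 1"
    unfolding S_def by simp
  ultimately show ?thesis unfolding S_def j_def by simp
qed

lemma conv_layer_injective:
  fixes D :: "nat \<Rightarrow> nat \<Rightarrow> real" and A B :: "nat \<Rightarrow> real"
  assumes conv: "conv_dict N mp mc len D" and "0 < mp" "0 < len"
    and unit: "unit_columns (N*mp) (N*mc) D"
    and same_image: "\<forall>p<N*mp. matvec (N*mc) D A p = matvec (N*mc) D B p"
    and A: "real (stripe_norm N len mc A) \<le> lam" and B: "real (stripe_norm N len mc B) \<le> lam"
    and lam: "ereal lam < coh_bound (mutual_coherence (N*mp) (N*mc) D)"
  shows "\<forall>c<N*mc. A c = B c"
proof (rule ccontr)
  define x where "x = (\<lambda>c. A c - B c)"
  define \<mu> where "\<mu> = mutual_coherence (N*mp) (N*mc) D"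
  assume "\<not> ?thesis"
  then have "\<exists>c<N*mc. x c \<noteq> 0" unfolding x_def by auto
  then obtain a where a: "a < N*mc" "x a \<noteq> 0" and peak: "\<And>c. c < N*mc \<Longrightarrow> \<bar>x c\<bar> \<le> \<bar>x a\<bar>"
    by (rule obtain_nonzero_abs_peak) auto
  have null: "\<forall>p<N*mp. matvec (N*mc) D x p = 0"
    using same_image unfolding x_def matvec_def by (simp add: right_diff_distrib sum_subtractf)
  define S where "S = {c. c < N*mc \<and> c \<noteq> a \<and> x c \<noteq> 0 \<and> (\<Sum>p<N*mp. D p a * D p c) \<noteq> 0}"
  have cover: "1 \<le> \<mu> * card S"
    using null_vector_coherence_bound[OF unit null a peak] unfolding \<mu>_def S_def .
  have "0 < \<mu>"
  proof (rule ccontr)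
    assume "\<not> 0 < \<mu>"
    then have "\<mu> * card S \<le> 0" by (simp add: mult_nonpos_nonneg)
    with cover show False by simp
  qed
  define j where "j = a div mc"
  have "j < N" using a(1) unfolding j_def by (simp add: less_mult_imp_div_less)
  have "card S + 1 \<le> stripe_l0 N len mc x j"
    using conv_dict_overlap_card_le_stripe_l0[where x = x, OF conv \<open>0 < mp\<close> \<open>0 < len\<close> a]
    unfolding S_def j_def .
  also have "\<dots> \<le> stripe_l0 N len mc A j + stripe_l0 N len mc B j"
    unfolding x_def by (rule stripe_l0_diff_le)
  also have "\<dots> \<le> stripe_norm N len mc A + stripe_norm N len mc B"
    by (intro add_mono stripe_l0_le_stripe_norm \<open>j < N\<close>)
  finally have "real (card S) + 1 \<le> 2 * lam"
    using A B by linarith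
  also have "\<dots> < 1 + 1 / \<mu>"
    using less_coh_boundD[OF \<open>0 < \<mu>\<close>] lam unfolding \<mu>_def .
  finally have "\<mu> * card S < 1"
    using \<open>0 < \<mu>\<close> by (simp add: field_simps)
  with cover show False by simp
qed

lemma dcp_solution_unique_if_layers_injective:
  assumes injective: "\<And>i A B. i \<in> {1..K} \<Longrightarrow>
      \<forall>p<N * m (i-1). matvec (N * m i) (D i) A p = matvec (N * m i) (D i) B p \<Longrightarrow>
      real (stripe_norm N (n (i-1)) (m i) A) \<le> lam i \<Longrightarrow>
      real (stripe_norm N (n (i-1)) (m i) B) \<le> lam i \<Longrightarrow> \<forall>c<N * m i. A c = B c"
    and G: "dcp_solution N m n K D lam X G" and G': "dcp_solution N m n K D lam X G'"
  shows "\<forall>i\<in>{1..K}. \<forall>c<N * m i. G' i c = G i c"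
proof
  fix i assume "i \<in> {1..K}"
  then show "\<forall>c<N * m i. G' i c = G i c"
  proof (induction i rule: less_induct)
    case (less i)
    have previous: "\<forall>c<N * m (i-1). G' (i-1) c = G (i-1) c" if "i \<noteq> 1"
    proof (rule less.IH)
      show "i - 1 < i" "i - 1 \<in> {1..K}" using less.prems that by auto
    qed
    have same_input: "(if i = 1 then X p else G' (i-1) p) = (if i = 1 then X p else G (i-1) p)"
      if "p < N * m (i-1)" for p
      using previous that by simp
    from G G' less.prems have
      layer: "\<forall>p<N * m (i-1). (if i = 1 then X p else G (i-1) p) = matvec (N * m i) (D i) (G i) p"
      and layer': "\<forall>p<N * m (i-1). (if i = 1 then X p else G' (i-1) p) = matvec (N * m i) (D i) (G' i) p"
      and "real (stripe_norm N (n (i-1)) (m i) (G i)) \<le> lam i"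
      and "real (stripe_norm N (n (i-1)) (m i) (G' i)) \<le> lam i"
      unfolding dcp_solution_def by blast+
    moreover have "\<forall>p<N * m (i-1). matvec (N * m i) (D i) (G' i) p = matvec (N * m i) (D i) (G i) p"
      using layer layer' same_input by metis
    ultimately show ?case using injective less.prems by blast
  qed
qed

theorem theorem1:
  fixes N K :: nat
    and m n :: "nat \<Rightarrow> nat"
    and D :: "nat \<Rightarrow> nat \<Rightarrow> nat \<Rightarrow> real"
    and X :: "nat \<Rightarrow> real"
    and G :: "nat \<Rightarrow> nat \<Rightarrow> real"
    and lam :: "nat \<Rightarrow> real"
  assumes N_pos: "N \<ge> 1"
    and m0: "m 0 = 1"
    and m_pos: "\<forall>i\<in>{1..K}. m i \<ge> 1"
    and n_range: "\<forall>i\<in>{1..K}. 1 \<le> n (i-1) \<and> n (i-1) \<le> N"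
    and conv: "\<forall>i\<in>{1..K}. conv_dict N (m (i-1)) (m i) (n (i-1)) (D i)"
    and unit: "\<forall>i\<in>{1..K}. unit_columns (N * m (i-1)) (N * m i) (D i)"
    and X_eq: "\<forall>p < N. X p = matvec (N * m 1) (D 1) (G 1) p"
    and chain: "\<forall>i\<in>{2..K}. \<forall>p < N * m (i-1). G (i-1) p = matvec (N * m i) (D i) (G i) p"
    and sparse: "\<forall>i\<in>{1..K}. ereal (real (stripe_norm N (n (i-1)) (m i) (G i)))
                   < coh_bound (mutual_coherence (N * m (i-1)) (N * m i) (D i))"
    and lam_bounds: "\<forall>i\<in>{1..K}. real (stripe_norm N (n (i-1)) (m i) (G i)) \<le> lam i \<and>
                   ereal (lam i) < coh_bound (mutual_coherence (N * m (i-1)) (N * m i) (D i))"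
  shows "dcp_solution N m n K D lam X G \<and>
         (\<forall>G'. dcp_solution N m n K D lam X G' \<longrightarrow>
                (\<forall>i\<in>{1..K}. \<forall>c < N * m i. G' i c = G i c))"
proof (intro conjI allI impI)
  show G: "dcp_solution N m n K D lam X G"
    unfolding dcp_solution_def
  proof (intro conjI ballI allI impI)
    fix i p assume "i \<in> {1..K}" "p < N * m (i-1)"
    then show "(if i = 1 then X p else G (i-1) p) = matvec (N * m i) (D i) (G i) p"
      using X_eq chain m0 by (cases "i = 1") auto
  qed (use lam_bounds in blast)
  have m_prev_pos: "0 < m (i-1)" if "i \<in> {1..K}" for i
  proof (cases "i = 1")
    case False
    with that have "i - 1 \<in> {1..K}" by auto
    with m_pos have "1 \<le> m (i-1)" by blast
    then show ?thesis by simp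
  qed (simp add: m0)
  have injective: "\<forall>c<N * m i. A c = B c"
    if i: "i \<in> {1..K}"
      and same_image: "\<forall>p<N * m (i-1). matvec (N * m i) (D i) A p = matvec (N * m i) (D i) B p"
      and A: "real (stripe_norm N (n (i-1)) (m i) A) \<le> lam i"
      and B: "real (stripe_norm N (n (i-1)) (m i) B) \<le> lam i" for i A B
  proof (rule conv_layer_injective[OF _ _ _ _ same_image A B])
    show "conv_dict N (m (i-1)) (m i) (n (i-1)) (D i)" using conv i by blast
    show "0 < m (i-1)" using m_prev_pos i .
    show "0 < n (i-1)" using n_range i by (simp add: Suc_le_eq del: atLeastAtMost_iff)
    show "unit_columns (N * m (i-1)) (N * m i) (D i)" using unit i by blast
    show "ereal (lam i) < coh_bound (mutual_coherence (N * m (i-1)) (N * m i) (D i))"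
      using lam_bounds i by blast
  qed
  fix G' assume "dcp_solution N m n K D lam X G'"
  with G show "\<forall>i\<in>{1..K}. \<forall>c < N * m i. G' i c = G i c"
    by (intro dcp_solution_unique_if_layers_injective[OF injective])
qed

end
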